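(* Let $f:M\to\mathbb{R}^3$ be an immersion of a surface with an eq\"uiaffine transversal vector field $\xi$ and positive definite induced bilinear form $h$, let $(u,v)$ be local isothermal coordinates with $h(\partial_u,\partial_u)=h(\partial_v,\partial_v)=\rho$, $h(\partial_u,\partial_v)=0$, and let $\nu$ be the co-normal ($\nu\cdot f_u=\nu\cdot f_v=0$, $\nu\cdot\xi=1$). Let $(b_{ij})$ be the matrix of the shape operator in these coordinates, i.e. $\xi_u=-b_{11}f_u-b_{21}f_v$, $\xi_v=-b_{12}f_u-b_{22}f_v$. Then $$\begin{pmatrix} b_{11}&b_{12}\\ b_{21}&b_{22}\end{pmatrix}=-\frac{1}{\delta}\begin{pmatrix}\nu_{uu}\cdot\xi & \nu_{uv}\cdot\xi\\ \nu_{uv}\cdot\xi & \nu_{vv}\cdot\xi\end{pmatrix},\qquad \delta=\frac{[f_u,f_v,\xi]\,[\nu,\nu_u,\nu_v]}{\rho}.$$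
   Context: $D$ denotes the flat connection of $\mathbb{R}^3$; $h$, the shape operator $B$ and the $1$-form $\tau$ are defined by $D_Xf_*Y=f_*(\nabla_XY)+h(X,Y)\xi$ and $D_X\xi=-f_*(BX)+\tau(X)\xi$; $\xi$ is eq\"uiaffine if $\tau=0$. $\cdot$ is the Euclidean inner product, $[a,b,c]$ the determinant of three vectors, subscripts denote partial derivatives. *)

theory Defs
  imports "HOL-Analysis.Analysis"
begin

definition det3 :: "real^3 \<Rightarrow> real^3 \<Rightarrow> real^3 \<Rightarrow> real" where
  "det3 a b c = det (vector [a, b, c] :: real^3^3)"

definition has_partials :: "(real \<times> real \<Rightarrow> real^3) \<Rightarrow> (real \<times> real \<Rightarrow> real^3)
    \<Rightarrow> (real \<times> real \<Rightarrow> real^3) \<Rightarrow> (real \<times> real) set \<Rightarrow> bool" where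
  "has_partials F Fu Fv U \<longleftrightarrow>
     (\<forall>p\<in>U. (F has_derivative (\<lambda>(s, t). s *\<^sub>R Fu p + t *\<^sub>R Fv p)) (at p))"

end

theory Submission
  imports Defs
begin

(* Differentiating the co-normal conditions and inserting the Gauss and Weingarten formulas gives
   nu_u.xi = nu_v.xi = 0, nu_u.f_u = nu_v.f_v = -rho and nu_u.f_v = nu_v.f_u = 0; differentiating
   nu_u.xi = nu_v.xi = 0 once more gives nu_ij.xi = -rho b_ij, where b_21 needs nu_uv = nu_vu
   (Schwarz). The same relations make the matrix of inner products of (f_u, f_v, xi) with
   (nu, nu_u, nu_v) a permutation of diag(-rho, -rho, 1), whence delta = rho. *)

lemma has_vector_derivative_first_partial:
  fixes F :: "real \<times> real \<Rightarrow> 'a::real_normed_vector"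
  assumes "(F has_derivative (\<lambda>(s, t). s *\<^sub>R X + t *\<^sub>R Y)) (at (p + (x, y)))"
  shows "((\<lambda>x. F (p + (x, y))) has_vector_derivative X) (at x)"
proof -
  have "((\<lambda>x. p + (x, y)) has_derivative (\<lambda>t. (t, 0))) (at x)"
    by (auto intro!: derivative_eq_intros)
  from has_derivative_compose[OF this assms] show ?thesis
    by (simp add: has_vector_derivative_def o_def)
qed

lemma has_derivative_swap_partials:
  fixes F :: "real \<times> real \<Rightarrow> 'a::real_normed_vector"
  assumes "(F has_derivative (\<lambda>(s, t). s *\<^sub>R X + t *\<^sub>R Y)) (at (prod.swap q))"
  shows "((\<lambda>q. F (prod.swap q)) has_derivative (\<lambda>(s, t). s *\<^sub>R Y + t *\<^sub>R X)) (at q)"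
proof -
  have "(prod.swap has_derivative prod.swap) (at q)"
    unfolding prod.swap_def by (auto intro!: derivative_eq_intros)
  from has_derivative_compose[OF this assms] show ?thesis
    by (simp add: o_def case_prod_unfold add.commute)
qed

definition second_difference ::
    "(real \<times> real \<Rightarrow> 'a::real_normed_vector) \<Rightarrow> real \<times> real \<Rightarrow> real \<Rightarrow> 'a"
  where "second_difference F p h = F (p + (h, h)) - F (p + (h, 0)) - F (p + (0, h)) + F p"

lemma second_difference_swap:
  "second_difference (\<lambda>q. F (prod.swap q)) (prod.swap p) = second_difference F p"
  by (cases p) (auto simp: second_difference_def)

(* Mean value inequality for x \<mapsto> F (p + (x, h)) - F (p + (x, 0)), linearised at x = 0. *)
lemma norm_second_difference_le:
  fixes F Fu Fv :: "real \<times> real \<Rightarrow> 'a::real_normed_vector"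
  assumes h: "h > 0"
    and dF: "\<And>x y. x \<in> {0..h} \<Longrightarrow> y \<in> {0..h} \<Longrightarrow>
      (F has_derivative (\<lambda>(s, t). s *\<^sub>R Fu (p + (x, y)) + t *\<^sub>R Fv (p + (x, y)))) (at (p + (x, y)))"
    and Fu_lin: "\<And>x y. x \<in> {0..h} \<Longrightarrow> y \<in> {0..h} \<Longrightarrow>
      norm (Fu (p + (x, y)) - Fu p - (x *\<^sub>R A + y *\<^sub>R B)) \<le> \<epsilon> * (x + y)"
  shows "norm (second_difference F p h - (h * h) *\<^sub>R B) \<le> 5 * \<epsilon> * h * h"
proof -
  define g where "g x = F (p + (x, h)) - F (p + (x, 0))" for x
  define g' where "g' x = Fu (p + (x, h)) - Fu (p + (x, 0))" for x
  have p0: "p + (0, 0) = p"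
    by (simp add: zero_prod_def[symmetric])
  define L where "L x y = Fu (p + (x, y)) - Fu p - (x *\<^sub>R A + y *\<^sub>R B)" for x y
  have L: "norm (L x y) \<le> \<epsilon> * (x + y)" if "x \<in> {0..h}" "y \<in> {0..h}" for x y
    using Fu_lin[OF that] by (simp add: L_def)
  have "0 \<le> \<epsilon> * h"
    using order_trans[OF norm_ge_zero L[of 0 h]] h by simp
  then have "\<epsilon> \<ge> 0"
    using h by (simp add: zero_le_mult_iff)
  have Fu_partial: "((\<lambda>x. F (p + (x, y))) has_vector_derivative Fu (p + (x, y))) (at x)"
    if "x \<in> {0..h}" "y \<in> {0..h}" for x y
    by (rule has_vector_derivative_first_partial[OF dF[OF that]])
  have "(g has_vector_derivative g' x) (at x within {0..h})" if "x \<in> {0..h}" for x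
    using has_vector_derivative_diff[OF Fu_partial[of x h] Fu_partial[of x 0]] that h
    by (simp add: g_def[abs_def] g'_def has_vector_derivative_at_within)
  moreover have "norm (g' x - g' 0) \<le> 4 * \<epsilon> * h" if x: "x \<in> {0..h}" for x
  proof -
    have "g' x - g' 0 = L x h - L x 0 - L 0 h"
      by (simp add: g'_def L_def p0 algebra_simps)
    also have "norm \<dots> \<le> norm (L x h) + norm (L x 0) + norm (L 0 h)"
      using norm_triangle_ineq4[of "L x h - L x 0" "L 0 h"] norm_triangle_ineq4[of "L x h" "L x 0"]
      by linarith
    also have "\<dots> \<le> \<epsilon> * (x + h) + \<epsilon> * x + \<epsilon> * h"
      using L[of x h] L[of x 0] L[of 0 h] x h by simp
    also have "\<dots> \<le> 4 * \<epsilon> * h"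
      using x \<open>\<epsilon> \<ge> 0\<close> mult_left_mono[of x h \<epsilon>] by (simp add: algebra_simps)
    finally show ?thesis .
  qed
  ultimately have "norm (g h - g 0 - h *\<^sub>R g' 0) \<le> h * (4 * \<epsilon> * h)"
    using vector_differentiable_bound_linearization[of "{0..h}" g g' 0 h 0 "4 * \<epsilon> * h"] h
    by (simp add: closed_segment_eq_real_ivl)
  moreover have "norm (h *\<^sub>R g' 0 - (h * h) *\<^sub>R B) \<le> h * (\<epsilon> * h)"
  proof -
    have "h *\<^sub>R g' 0 - (h * h) *\<^sub>R B = h *\<^sub>R L 0 h"
      by (simp add: g'_def L_def p0 algebra_simps)
    then show ?thesis using L[of 0 h] h by (simp add: mult_left_mono)
  qed
  ultimately have "norm (g h - g 0 - h *\<^sub>R g' 0) + norm (h *\<^sub>R g' 0 - (h * h) *\<^sub>R B)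
      \<le> 5 * \<epsilon> * h * h"
    by (simp add: algebra_simps)
  moreover have "second_difference F p h - (h * h) *\<^sub>R B
      = (g h - g 0 - h *\<^sub>R g' 0) + (h *\<^sub>R g' 0 - (h * h) *\<^sub>R B)"
    by (simp add: second_difference_def g_def p0)
  ultimately show ?thesis
    by (metis norm_triangle_ineq order_trans)
qed

lemma second_difference_quotient_tendsto:
  fixes F Fu Fv :: "real \<times> real \<Rightarrow> 'a::real_normed_vector"
  assumes U: "open U" "p \<in> U"
    and dF: "\<And>q. q \<in> U \<Longrightarrow> (F has_derivative (\<lambda>(s, t). s *\<^sub>R Fu q + t *\<^sub>R Fv q)) (at q)"
    and dFu: "(Fu has_derivative (\<lambda>(s, t). s *\<^sub>R A + t *\<^sub>R B)) (at p)"
  shows "((\<lambda>h. second_difference F p h /\<^sub>R (h * h)) \<longlongrightarrow> B) (at_right 0)"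
proof (rule tendstoI)
  fix e :: real assume "e > 0"
  define \<epsilon> where "\<epsilon> = e / 10"
  have "\<epsilon> > 0" using \<open>e > 0\<close> by (simp add: \<epsilon>_def)
  then obtain d where "d > 0" and lin: "\<And>y. norm (y - p) < d \<Longrightarrow>
      norm (Fu y - Fu p - (\<lambda>(s, t). s *\<^sub>R A + t *\<^sub>R B) (y - p)) \<le> \<epsilon> * norm (y - p)"
    using dFu unfolding has_derivative_at_alt by meson
  obtain r where "r > 0" "ball p r \<subseteq> U"
    using U open_contains_ball by blast
  show "\<forall>\<^sub>F h in at_right 0. dist (second_difference F p h /\<^sub>R (h * h)) B < e"
    unfolding eventually_at_right_field
  proof (intro exI[of _ "min r d / 2"] conjI allI impI)
    fix h :: real assume h: "0 < h" "h < min r d / 2"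
    have small: "norm (x, y) \<le> x + y \<and> x + y < min r d" if "x \<in> {0..h}" "y \<in> {0..h}" for x y
      using norm_Pair_le[of x y] that h by auto
    define \<Delta> where "\<Delta> = second_difference F p h"
    have bound: "norm (\<Delta> - (h * h) *\<^sub>R B) \<le> 5 * \<epsilon> * h * h"
      unfolding \<Delta>_def
    proof (rule norm_second_difference_le[OF \<open>h > 0\<close>])
      fix x y assume xy: "x \<in> {0..h}" "y \<in> {0..h}"
      have "dist p (p + (x, y)) = norm (x, y)"
        by (simp add: dist_norm norm_Pair)
      then have "p + (x, y) \<in> ball p r"
        using small[OF xy] by simp
      then show "(F has_derivative (\<lambda>(s, t). s *\<^sub>R Fu (p + (x, y)) + t *\<^sub>R Fv (p + (x, y))))
          (at (p + (x, y)))"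
        using \<open>ball p r \<subseteq> U\<close> dF by blast
      have "norm (Fu (p + (x, y)) - Fu p - (x *\<^sub>R A + y *\<^sub>R B)) \<le> \<epsilon> * norm (x, y)"
        using lin[of "p + (x, y)"] small[OF xy] by simp
      also have "\<dots> \<le> \<epsilon> * (x + y)"
        using small[OF xy] \<open>\<epsilon> > 0\<close> by (simp add: mult_left_mono)
      finally show "norm (Fu (p + (x, y)) - Fu p - (x *\<^sub>R A + y *\<^sub>R B)) \<le> \<epsilon> * (x + y)" .
    qed
    have eq: "\<Delta> /\<^sub>R (h * h) - B = (\<Delta> - (h * h) *\<^sub>R B) /\<^sub>R (h * h)"
      using \<open>h > 0\<close> by (simp add: scaleR_diff_right field_simps)
    have "dist (\<Delta> /\<^sub>R (h * h)) B = norm (\<Delta> - (h * h) *\<^sub>R B) / (h * h)"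
      unfolding dist_norm eq using \<open>h > 0\<close> by (simp add: divide_inverse_commute)
    also have "\<dots> \<le> 5 * \<epsilon>"
      using bound \<open>h > 0\<close> by (simp add: pos_divide_le_eq mult.assoc)
    finally have "dist (\<Delta> /\<^sub>R (h * h)) B \<le> 5 * \<epsilon>" .
    then show "dist (second_difference F p h /\<^sub>R (h * h)) B < e"
      using \<open>e > 0\<close> by (simp add: \<Delta>_def \<epsilon>_def)
  qed (use \<open>r > 0\<close> \<open>d > 0\<close> in auto)
qed

(* The second difference is invariant under swapping the coordinates, so Fuv and Fvu are limits
   of the same quotient. *)
lemma mixed_partials_eq:
  fixes F Fu Fv :: "real \<times> real \<Rightarrow> 'a::real_normed_vector"
  assumes U: "open U" "p \<in> U"
    and dF: "\<And>q. q \<in> U \<Longrightarrow> (F has_derivative (\<lambda>(s, t). s *\<^sub>R Fu q + t *\<^sub>R Fv q)) (at q)"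
    and dFu: "(Fu has_derivative (\<lambda>(s, t). s *\<^sub>R Fuu + t *\<^sub>R Fuv)) (at p)"
    and dFv: "(Fv has_derivative (\<lambda>(s, t). s *\<^sub>R Fvu + t *\<^sub>R Fvv)) (at p)"
  shows "Fuv = Fvu"
proof -
  have "((\<lambda>h. second_difference F p h /\<^sub>R (h * h)) \<longlongrightarrow> Fuv) (at_right 0)"
    by (rule second_difference_quotient_tendsto[OF U dF dFu])
  moreover have "((\<lambda>h. second_difference F p h /\<^sub>R (h * h)) \<longlongrightarrow> Fvu) (at_right 0)"
  proof -
    have open_swap: "open (prod.swap -` U)"
      by (intro continuous_open_vimage U) (auto intro: continuous_intros simp: prod.swap_def)
    have dG: "((\<lambda>q. F (prod.swap q)) has_derivative
        (\<lambda>(s, t). s *\<^sub>R Fv (prod.swap q) + t *\<^sub>R Fu (prod.swap q))) (at q)"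
      if "q \<in> prod.swap -` U" for q
      using that by (intro has_derivative_swap_partials dF) simp
    have dGu: "((\<lambda>q. Fv (prod.swap q)) has_derivative (\<lambda>(s, t). s *\<^sub>R Fvv + t *\<^sub>R Fvu))
        (at (prod.swap p))"
      using dFv by (intro has_derivative_swap_partials) simp
    have "prod.swap p \<in> prod.swap -` U"
      using U by simp
    from second_difference_quotient_tendsto[OF open_swap this dG dGu] show ?thesis
      by (simp only: second_difference_swap)
  qed
  ultimately show ?thesis
    using tendsto_unique[OF trivial_limit_at_right_real] by blast
qed

lemma has_partialsD:
  "has_partials F Fu Fv U \<Longrightarrow> p \<in> U \<Longrightarrow>
    (F has_derivative (\<lambda>(s, t). s *\<^sub>R Fu p + t *\<^sub>R Fv p)) (at p)"
  unfolding has_partials_def by blast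

lemma partials_inner_const:
  assumes U: "open U" "p \<in> U" and const: "\<forall>q\<in>U. X q \<bullet> Y q = c"
    and dX: "has_partials X Xu Xv U" and dY: "has_partials Y Yu Yv U"
  shows "Xu p \<bullet> Y p + X p \<bullet> Yu p = 0" and "Xv p \<bullet> Y p + X p \<bullet> Yv p = 0"
proof -
  let ?D = "\<lambda>h. X p \<bullet> (\<lambda>(s, t). s *\<^sub>R Yu p + t *\<^sub>R Yv p) h +
    (\<lambda>(s, t). s *\<^sub>R Xu p + t *\<^sub>R Xv p) h \<bullet> Y p"
  have "((\<lambda>q. X q \<bullet> Y q) has_derivative ?D) (at p)"
    by (rule has_derivative_inner[OF has_partialsD[OF dX U(2)] has_partialsD[OF dY U(2)]])
  moreover have "((\<lambda>q. X q \<bullet> Y q) has_derivative (\<lambda>h. 0)) (at p)"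
    by (rule has_derivative_transform_within_open[OF has_derivative_const U]) (use const in auto)
  ultimately have "?D = (\<lambda>h. 0)"
    by (rule has_derivative_unique)
  from fun_cong[OF this, of "(1, 0)"] fun_cong[OF this, of "(0, 1)"]
  show "Xu p \<bullet> Y p + X p \<bullet> Yu p = 0" and "Xv p \<bullet> Y p + X p \<bullet> Yv p = 0"
    by (simp_all add: inner_commute)
qed

lemma det3_mult_det3:
  fixes a b c d e g :: "real^3"
  shows "det3 a b c * det3 d e g =
    (a\<bullet>d) * (b\<bullet>e) * (c\<bullet>g) - (a\<bullet>d) * (b\<bullet>g) * (c\<bullet>e) - (a\<bullet>e) * (b\<bullet>d) * (c\<bullet>g) +
    (a\<bullet>e) * (b\<bullet>g) * (c\<bullet>d) + (a\<bullet>g) * (b\<bullet>d) * (c\<bullet>e) - (a\<bullet>g) * (b\<bullet>e) * (c\<bullet>d)"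
  (is "_ = ?rhs")
proof -
  let ?M = "vector [a, b, c] :: real^3^3"
  let ?N = "vector [d, e, g] :: real^3^3"
  have "det3 a b c * det3 d e g = det (?M ** transpose ?N)"
    unfolding det3_def det_mul det_transpose ..
  also have "\<dots> = ?rhs"
    unfolding det_3 by (simp add: matrix_matrix_mult_def transpose_def inner_vec_def sum_3 mult.commute)
  finally show ?thesis .
qed

theorem lemma3p2:
  fixes U :: "(real \<times> real) set"
    and f fu fv fuu fuv fvu fvv :: "real \<times> real \<Rightarrow> real^3"
    and \<xi> \<xi>u \<xi>v :: "real \<times> real \<Rightarrow> real^3"
    and \<nu> \<nu>u \<nu>v \<nu>uu \<nu>uv \<nu>vu \<nu>vv :: "real \<times> real \<Rightarrow> real^3"
    and \<rho> b11 b12 b21 b22 :: "real \<times> real \<Rightarrow> real"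
    and a1 a2 c1 c2 d1 d2 e1 e2 :: "real \<times> real \<Rightarrow> real"
  assumes U_open: "open U"
    and f_diff: "has_partials f fu fv U"
    and fu_diff: "has_partials fu fuu fuv U"
    and fv_diff: "has_partials fv fvu fvv U"
    and \<xi>_diff: "has_partials \<xi> \<xi>u \<xi>v U"
    and \<nu>_diff: "has_partials \<nu> \<nu>u \<nu>v U"
    and \<nu>u_diff: "has_partials \<nu>u \<nu>uu \<nu>uv U"
    and \<nu>v_diff: "has_partials \<nu>v \<nu>vu \<nu>vv U"
    \<comment> \<open>\<xi> is transversal to the immersion f\<close>
    and transversal: "\<forall>p\<in>U. det3 (fu p) (fv p) (\<xi> p) \<noteq> 0"
    \<comment> \<open>Gauss formula D_X f_*Y = f_*(\<nabla>_X Y) + h(X,Y)\<xi> in isothermal coordinates: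
        h(d_u,d_u) = h(d_v,d_v) = \<rho> > 0, h(d_u,d_v) = h(d_v,d_u) = 0\<close>
    and rho_pos: "\<forall>p\<in>U. \<rho> p > 0"
    and gauss_uu: "\<forall>p\<in>U. fuu p = a1 p *\<^sub>R fu p + a2 p *\<^sub>R fv p + \<rho> p *\<^sub>R \<xi> p"
    and gauss_uv: "\<forall>p\<in>U. fuv p = c1 p *\<^sub>R fu p + c2 p *\<^sub>R fv p"
    and gauss_vu: "\<forall>p\<in>U. fvu p = d1 p *\<^sub>R fu p + d2 p *\<^sub>R fv p"
    and gauss_vv: "\<forall>p\<in>U. fvv p = e1 p *\<^sub>R fu p + e2 p *\<^sub>R fv p + \<rho> p *\<^sub>R \<xi> p"
    \<comment> \<open>Weingarten formula for an equiaffine \<xi> (\<tau> = 0), with shape operator matrix (b_ij)\<close>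
    and weingarten_u: "\<forall>p\<in>U. \<xi>u p = - b11 p *\<^sub>R fu p - b21 p *\<^sub>R fv p"
    and weingarten_v: "\<forall>p\<in>U. \<xi>v p = - b12 p *\<^sub>R fu p - b22 p *\<^sub>R fv p"
    \<comment> \<open>co-normal\<close>
    and conormal: "\<forall>p\<in>U. \<nu> p \<bullet> fu p = 0 \<and> \<nu> p \<bullet> fv p = 0 \<and> \<nu> p \<bullet> \<xi> p = 1"
  shows "\<forall>p\<in>U.
     (let \<delta> = det3 (fu p) (fv p) (\<xi> p) * det3 (\<nu> p) (\<nu>u p) (\<nu>v p) / \<rho> p in
        b11 p = - (\<nu>uu p \<bullet> \<xi> p) / \<delta> \<and> b12 p = - (\<nu>uv p \<bullet> \<xi> p) / \<delta> \<and>
        b21 p = - (\<nu>uv p \<bullet> \<xi> p) / \<delta> \<and> b22 p = - (\<nu>vv p \<bullet> \<xi> p) / \<delta>)"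
proof
  fix p assume p: "p \<in> U"
  have \<nu>_fu: "\<forall>q\<in>U. \<nu> q \<bullet> fu q = 0" and \<nu>_fv: "\<forall>q\<in>U. \<nu> q \<bullet> fv q = 0"
    and \<nu>_\<xi>: "\<forall>q\<in>U. \<nu> q \<bullet> \<xi> q = 1"
    using conormal by auto
  have \<nu>'_\<xi>: "\<forall>q\<in>U. \<nu>u q \<bullet> \<xi> q = 0 \<and> \<nu>v q \<bullet> \<xi> q = 0"
    using partials_inner_const[OF U_open _ \<nu>_\<xi> \<nu>_diff \<xi>_diff] weingarten_u weingarten_v conormal
    by (simp add: inner_diff_right)
  have \<nu>'_f: "\<nu>u p \<bullet> fu p = - \<rho> p" "\<nu>v p \<bullet> fu p = 0" "\<nu>u p \<bullet> fv p = 0" "\<nu>v p \<bullet> fv p = - \<rho> p"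
    using partials_inner_const[OF U_open p \<nu>_fu \<nu>_diff fu_diff]
      partials_inner_const[OF U_open p \<nu>_fv \<nu>_diff fv_diff]
      conormal gauss_uu gauss_uv gauss_vu gauss_vv p
    by (simp_all add: inner_add_right)
  have \<nu>''_\<xi>: "\<nu>uu p \<bullet> \<xi> p = - \<rho> p * b11 p" "\<nu>uv p \<bullet> \<xi> p = - \<rho> p * b12 p"
      "\<nu>vu p \<bullet> \<xi> p = - \<rho> p * b21 p" "\<nu>vv p \<bullet> \<xi> p = - \<rho> p * b22 p"
    using partials_inner_const[OF U_open p _ \<nu>u_diff \<xi>_diff, where c = 0]
      partials_inner_const[OF U_open p _ \<nu>v_diff \<xi>_diff, where c = 0]
      \<nu>'_\<xi> \<nu>'_f weingarten_u weingarten_v p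
    by (simp_all add: inner_diff_right algebra_simps)
  have "\<nu>uv p = \<nu>vu p"
    by (rule mixed_partials_eq[OF U_open p has_partialsD[OF \<nu>_diff]
          has_partialsD[OF \<nu>u_diff p] has_partialsD[OF \<nu>v_diff p]])
  moreover have "det3 (fu p) (fv p) (\<xi> p) * det3 (\<nu> p) (\<nu>u p) (\<nu>v p) = \<rho> p * \<rho> p"
    unfolding det3_mult_det3 using conormal \<nu>'_\<xi> \<nu>'_f p by (simp add: inner_commute)
  ultimately show "let \<delta> = det3 (fu p) (fv p) (\<xi> p) * det3 (\<nu> p) (\<nu>u p) (\<nu>v p) / \<rho> p in
      b11 p = - (\<nu>uu p \<bullet> \<xi> p) / \<delta> \<and> b12 p = - (\<nu>uv p \<bullet> \<xi> p) / \<delta> \<and>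
      b21 p = - (\<nu>uv p \<bullet> \<xi> p) / \<delta> \<and> b22 p = - (\<nu>vv p \<bullet> \<xi> p) / \<delta>"
    using \<nu>''_\<xi> rho_pos[rule_format, OF p] by (simp add: Let_def)
qed

end
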